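(* Let $n\ge1$ and let $R=\mathbb{C}[x_{ij}: i\ne j,\ i,j\in[1,n+1]]$. Let $X$ be the $(n+1)\times(n+1)$ matrix with off-diagonal entries $x_{ij}$ and zero diagonal. Then the set of $2\times2$ minors of $X$ is a Gröbner basis of the ideal it generates with respect to the degree reverse lexicographic order induced by any total order of the variables.
   Context: Degree revlex order (for variables ordered $x_1>\dots>x_N$): $x^a>x^b$ if $\sum a_i>\sum b_i$, or the degrees are equal and the rightmost nonzero entry of $a-b$ is negative. *)

theory Defs
  imports Complex_Main "HOL-Library.Poly_Mapping"
begin

text \<open>Variables x_ij are indexed by pairs (i,j) of naturals; monomials are exponent
  vectors (finitely supported maps variable => nat); polynomials are finitely supported maps
  monomial => complex, with the convolution product of Poly_Mapping.\<close>

type_synonym variable = "nat \<times> nat"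
type_synonym monomial = "variable \<Rightarrow>\<^sub>0 nat"
type_synonym cpolynomial = "monomial \<Rightarrow>\<^sub>0 complex"

definition Vars :: "nat \<Rightarrow> variable set" where
  "Vars n = {(i, j). i \<in> {1..n+1} \<and> j \<in> {1..n+1} \<and> i \<noteq> j}"

definition Ring :: "nat \<Rightarrow> cpolynomial set" where
  "Ring n = {f. \<forall>m \<in> Poly_Mapping.keys f. Poly_Mapping.keys m \<subseteq> Vars n}"

definition Var :: "variable \<Rightarrow> cpolynomial" where
  "Var v = Poly_Mapping.single (Poly_Mapping.single v 1) 1"

definition Xentry :: "nat \<Rightarrow> nat \<Rightarrow> cpolynomial" where
  "Xentry i j = (if i = j then 0 else Var (i, j))"

definition minors2 :: "nat \<Rightarrow> cpolynomial set" where
  "minors2 n = {Xentry i j * Xentry i' j' - Xentry i j' * Xentry i' j | i i' j j'.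
      1 \<le> i \<and> i < i' \<and> i' \<le> n + 1 \<and> 1 \<le> j \<and> j < j' \<and> j' \<le> n + 1}"

definition ideal_gen :: "nat \<Rightarrow> cpolynomial set \<Rightarrow> cpolynomial set" where
  "ideal_gen n G = {(\<Sum>g\<in>F. c g * g) | F c. finite F \<and> F \<subseteq> G \<and> (\<forall>g\<in>F. c g \<in> Ring n)}"

definition mdeg :: "monomial \<Rightarrow> nat" where
  "mdeg a = (\<Sum>v\<in>Poly_Mapping.keys a. Poly_Mapping.lookup a v)"

text \<open>Degree reverse lexicographic order for the variable ordering given by the list vs,
  vs!0 > vs!1 > ... > vs!(N-1): a > b iff deg a > deg b, or degrees are equal and the
  rightmost nonzero entry of a - b is negative.\<close>
definition drl_greater :: "variable list \<Rightarrow> monomial \<Rightarrow> monomial \<Rightarrow> bool" where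
  "drl_greater vs a b \<longleftrightarrow> mdeg a > mdeg b \<or>
     (mdeg a = mdeg b \<and> (\<exists>k < length vs. Poly_Mapping.lookup a (vs ! k) < Poly_Mapping.lookup b (vs ! k) \<and>
        (\<forall>l. k < l \<and> l < length vs \<longrightarrow> Poly_Mapping.lookup a (vs ! l) = Poly_Mapping.lookup b (vs ! l))))"

definition is_lead_monom :: "variable list \<Rightarrow> cpolynomial \<Rightarrow> monomial \<Rightarrow> bool" where
  "is_lead_monom vs f m \<longleftrightarrow> m \<in> Poly_Mapping.keys f \<and> (\<forall>m' \<in> Poly_Mapping.keys f. m' \<noteq> m \<longrightarrow> drl_greater vs m m')"

definition monom_dvd :: "monomial \<Rightarrow> monomial \<Rightarrow> bool" where
  "monom_dvd a b \<longleftrightarrow> (\<forall>v. Poly_Mapping.lookup a v \<le> Poly_Mapping.lookup b v)"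

definition is_groebner_basis :: "nat \<Rightarrow> variable list \<Rightarrow> cpolynomial set \<Rightarrow> bool" where
  "is_groebner_basis n vs G \<longleftrightarrow>
     (\<forall>f \<in> ideal_gen n G. f \<noteq> 0 \<longrightarrow>
        (\<exists>g \<in> G. \<exists>mf mg. is_lead_monom vs f mf \<and> is_lead_monom vs g mg \<and> monom_dvd mg mf))"

end

theory Submission
  imports Defs
begin

text \<open>
  Let f be a nonzero element of the ideal of 2-minors, with leading monomial m, and suppose
  that no leading monomial of a minor divides m. The fibre of m is the set of monomials with the
  same row and column degrees as m; summing the coefficients of a polynomial over it amounts to
  substituting x_ij := y_i z_j and reading off a single coefficient.

  First, no index t occurs in m both as a row and as a column index: otherwise some x_tb x_ct
  divides m, and it is the leading monomial of the minor on rows t, c and columns t, b, whose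
  entry x_tt is zero. Consequently the fibre sum vanishes on every multiple of a minor: either
  both terms of the minor have the same row and column degrees and cancel, or the minor contains
  a term x_tb x_ct, all of whose multiples lie outside the fibre. Hence it vanishes on f.

  Second, m is the smallest monomial of its fibre: if m' in the fibre is smaller and x_pq is the
  last variable whose exponents differ (larger in m'), then balancing row p and column q produces
  x_pq' and x_p'q dividing m, both larger than x_pq, so x_pq' x_p'q is the leading monomial of
  the minor on rows p, p' and columns q, q'. Since m leads f, the fibre sum of f is the nonzero
  coefficient of m, a contradiction.
\<close>

definition coeff_sum :: "'a set \<Rightarrow> ('a \<Rightarrow>\<^sub>0 'b::comm_monoid_add) \<Rightarrow> 'b" where
  "coeff_sum F f = (\<Sum>m\<in>Poly_Mapping.keys f \<inter> F. Poly_Mapping.lookup f m)"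

lemma coeff_sum_superset:
  assumes "finite S" "Poly_Mapping.keys f \<subseteq> S"
  shows "coeff_sum F f = (\<Sum>m\<in>S \<inter> F. Poly_Mapping.lookup f m)"
  unfolding coeff_sum_def
  by (rule sum.mono_neutral_left) (use assms in \<open>auto simp: in_keys_iff\<close>)

lemma coeff_sum_add: "coeff_sum F (f + g) = coeff_sum F f + coeff_sum F g"
proof -
  let ?S = "Poly_Mapping.keys f \<union> Poly_Mapping.keys g"
  have "coeff_sum F (f + g) = (\<Sum>m\<in>?S \<inter> F. Poly_Mapping.lookup (f + g) m)"
    using keys_add[of f g] by (intro coeff_sum_superset) auto
  also have "\<dots> = coeff_sum F f + coeff_sum F g"
    by (simp add: lookup_add sum.distrib coeff_sum_superset[where S = ?S])
  finally show ?thesis .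
qed

lemma coeff_sum_diff:
  fixes f g :: "'a \<Rightarrow>\<^sub>0 'b::ab_group_add"
  shows "coeff_sum F (f - g) = coeff_sum F f - coeff_sum F g"
  using coeff_sum_add[of F f "- g"] by (simp add: coeff_sum_def sum_negf)

lemma coeff_sum_zero [simp]: "coeff_sum F 0 = 0"
  by (simp add: coeff_sum_def)

lemma coeff_sum_sum: "coeff_sum F (\<Sum>x\<in>X. h x) = (\<Sum>x\<in>X. coeff_sum F (h x))"
  by (induction X rule: infinite_finite_induct) (simp_all add: coeff_sum_add)

lemma lookup_mult_single_one_add:
  fixes c :: "'a::cancel_comm_monoid_add \<Rightarrow>\<^sub>0 'b::semiring_1"
  shows "Poly_Mapping.lookup (c * Poly_Mapping.single A 1) (u + A) = Poly_Mapping.lookup c u"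
proof -
  have "(\<Sum>q. (1::'b) when A = q when u + A = l + q) = (1 when l = u)" for l
  proof -
    have "(\<lambda>q. (1::'b) when A = q when u + A = l + q) = (\<lambda>q. (1 when l = u) when A = q)"
      by (auto simp: when_def fun_eq_iff)
    then show ?thesis by (simp only: Sum_any_when_equal')
  qed
  then show ?thesis
    by (simp add: lookup_mult lookup_single mult_when)
qed

lemma coeff_sum_mult_single_one:
  fixes c :: "'a::cancel_comm_monoid_add \<Rightarrow>\<^sub>0 'b::semiring_1"
  shows "coeff_sum F (c * Poly_Mapping.single A 1)
    = (\<Sum>u | u \<in> Poly_Mapping.keys c \<and> u + A \<in> F. Poly_Mapping.lookup c u)"
proof -
  let ?S = "(\<lambda>u. u + A) ` Poly_Mapping.keys c"
  have "coeff_sum F (c * Poly_Mapping.single A 1)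
      = (\<Sum>m\<in>?S \<inter> F. Poly_Mapping.lookup (c * Poly_Mapping.single A 1) m)"
    using keys_mult[of c "Poly_Mapping.single A 1"] by (intro coeff_sum_superset) auto
  also have "?S \<inter> F = (\<lambda>u. u + A) ` {u. u \<in> Poly_Mapping.keys c \<and> u + A \<in> F}"
    by auto
  also have "(\<Sum>m\<in>\<dots>. Poly_Mapping.lookup (c * Poly_Mapping.single A 1) m)
      = (\<Sum>u | u \<in> Poly_Mapping.keys c \<and> u + A \<in> F. Poly_Mapping.lookup c u)"
    by (subst sum.reindex) (auto simp: inj_on_def lookup_mult_single_one_add)
  finally show ?thesis .
qed

lemma lookup_single_add_single:
  "Poly_Mapping.lookup (Poly_Mapping.single x a + Poly_Mapping.single y b) v
    = (if v = x then a else 0) + (if v = y then b else 0)"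
  by (auto simp: lookup_add lookup_single when_def)

definition degree_in :: "('a \<Rightarrow> bool) \<Rightarrow> ('a \<Rightarrow>\<^sub>0 nat) \<Rightarrow> nat" where
  "degree_in P m = (\<Sum>v | v \<in> Poly_Mapping.keys m \<and> P v. Poly_Mapping.lookup m v)"

abbreviation row_degree :: "monomial \<Rightarrow> nat \<Rightarrow> nat" where
  "row_degree m i \<equiv> degree_in (\<lambda>v. fst v = i) m"

abbreviation col_degree :: "monomial \<Rightarrow> nat \<Rightarrow> nat" where
  "col_degree m j \<equiv> degree_in (\<lambda>v. snd v = j) m"

lemma degree_in_superset:
  assumes "finite S" "Poly_Mapping.keys m \<subseteq> S"
  shows "degree_in P m = (\<Sum>v | v \<in> S \<and> P v. Poly_Mapping.lookup m v)"
  unfolding degree_in_def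
  by (rule sum.mono_neutral_left) (use assms in \<open>auto simp: in_keys_iff\<close>)

lemma degree_in_add: "degree_in P (m + m') = degree_in P m + degree_in P m'"
proof -
  let ?S = "Poly_Mapping.keys m \<union> Poly_Mapping.keys m'"
  have "degree_in P (m + m') = (\<Sum>v | v \<in> ?S \<and> P v. Poly_Mapping.lookup (m + m') v)"
    using keys_add[of m m'] by (intro degree_in_superset) auto
  also have "\<dots> = degree_in P m + degree_in P m'"
    by (simp add: lookup_add sum.distrib degree_in_superset[where S = ?S])
  finally show ?thesis .
qed

lemma degree_in_single [simp]: "degree_in P (Poly_Mapping.single v k) = (if P v then k else 0)"
proof -
  have "{w. w \<in> Poly_Mapping.keys (Poly_Mapping.single v k) \<and> P w}
      = (if P v \<and> k \<noteq> 0 then {v} else {})"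
    by auto
  then show ?thesis by (simp add: degree_in_def)
qed

lemma degree_in_eq_0_iff: "degree_in P m = 0 \<longleftrightarrow> (\<forall>v\<in>Poly_Mapping.keys m. \<not> P v)"
  by (auto simp: degree_in_def in_keys_iff)

lemma mdeg_eq_degree_in: "mdeg m = degree_in (\<lambda>_. True) m"
  by (simp add: mdeg_def degree_in_def)

lemma mdeg_single [simp]: "mdeg (Poly_Mapping.single v k) = k"
  by (simp add: mdeg_eq_degree_in)

lemma mdeg_add: "mdeg (m + m') = mdeg m + mdeg m'"
  by (simp add: mdeg_eq_degree_in degree_in_add)

lemma degree_in_eq_exchange:
  assumes eq: "degree_in P m = degree_in P m'" and "P v"
    and less: "Poly_Mapping.lookup m v < Poly_Mapping.lookup m' v"
  shows "\<exists>w. P w \<and> w \<noteq> v \<and> Poly_Mapping.lookup m' w < Poly_Mapping.lookup m w"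
proof (rule ccontr)
  assume "\<not> ?thesis"
  then have le: "Poly_Mapping.lookup m w \<le> Poly_Mapping.lookup m' w" if "P w" for w
    using that less by (cases "w = v") (auto simp: not_less)
  let ?S = "Poly_Mapping.keys m \<union> Poly_Mapping.keys m'"
  have "v \<in> ?S" using less by (auto simp: in_keys_iff)
  then have "(\<Sum>w | w \<in> ?S \<and> P w. Poly_Mapping.lookup m w)
      < (\<Sum>w | w \<in> ?S \<and> P w. Poly_Mapping.lookup m' w)"
    using le less \<open>P v\<close> by (intro sum_strict_mono_ex1) auto
  with eq show False by (simp add: degree_in_superset[where S = ?S])
qed

abbreviation mon :: "variable \<Rightarrow> monomial" where
  "mon v \<equiv> Poly_Mapping.single v 1"

lemma Xentry_mult:
  "Xentry a b * Xentry a' b'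
    = (if a = b \<or> a' = b' then 0 else Poly_Mapping.single (mon (a, b) + mon (a', b')) 1)"
  by (simp add: Xentry_def Var_def mult_single)

definition minor2 :: "nat \<Rightarrow> nat \<Rightarrow> nat \<Rightarrow> nat \<Rightarrow> cpolynomial" where
  "minor2 i i' j j' = Xentry i j * Xentry i' j' - Xentry i j' * Xentry i' j"

lemma minor2_swap_rows: "minor2 i' i j j' = - minor2 i i' j j'"
  by (simp add: minor2_def algebra_simps)

lemma minor2_swap_cols: "minor2 i i' j' j = - minor2 i i' j j'"
  by (simp add: minor2_def algebra_simps)

lemma minor2_or_uminus_mem_minors2:
  assumes "{i, i', j, j'} \<subseteq> {1..n+1}" "i \<noteq> i'" "j \<noteq> j'"
  shows "minor2 i i' j j' \<in> minors2 n \<or> - minor2 i i' j j' \<in> minors2 n"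
proof -
  have mem: "minor2 a a' b b' \<in> minors2 n"
    if "a < a'" "b < b'" "{a, a', b, b'} \<subseteq> {1..n+1}" for a a' b b'
    using that unfolding minors2_def minor2_def by auto
  consider "i < i'" "j < j'" | "i < i'" "j' < j" | "i' < i" "j < j'" | "i' < i" "j' < j"
    using assms(2,3) by linarith
  then show ?thesis
  proof cases
    case 1
    then show ?thesis using assms(1) mem[of i i' j j'] by simp
  next
    case 2
    then show ?thesis using assms(1) mem[of i i' j' j] minor2_swap_cols[of i i' j j'] by simp
  next
    case 3
    then show ?thesis using assms(1) mem[of i' i j j'] minor2_swap_rows[of i i' j j'] by simp
  next
    case 4
    then show ?thesis
      using assms(1) mem[of i' i j' j] minor2_swap_rows[of i i' j' j] minor2_swap_cols[of i i' j j']
      by simp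
  qed
qed

definition degree_fiber :: "monomial \<Rightarrow> monomial set" where
  "degree_fiber m = {m'. mdeg m' = mdeg m \<and>
     (\<forall>i. row_degree m' i = row_degree m i \<and> col_degree m' i = col_degree m i)}"

definition row_col_disjoint :: "monomial \<Rightarrow> bool" where
  "row_col_disjoint m \<longleftrightarrow> (\<forall>i. row_degree m i = 0 \<or> col_degree m i = 0)"

lemma add_mem_degree_fiber_cong:
  assumes "mdeg A = mdeg B"
    and "\<And>i. row_degree A i = row_degree B i" "\<And>i. col_degree A i = col_degree B i"
  shows "u + A \<in> degree_fiber m \<longleftrightarrow> u + B \<in> degree_fiber m"
  using assms by (simp add: degree_fiber_def mdeg_add degree_in_add)

lemma add_not_mem_degree_fiber:
  assumes "row_col_disjoint m" "row_degree A t \<noteq> 0" "col_degree A t \<noteq> 0"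
  shows "u + A \<notin> degree_fiber m"
proof
  assume "u + A \<in> degree_fiber m"
  then have "row_degree m t = row_degree u t + row_degree A t"
    and "col_degree m t = col_degree u t + col_degree A t"
    by (simp_all add: degree_fiber_def degree_in_add)
  with assms show False unfolding row_col_disjoint_def by (metis add_is_0)
qed

lemma coeff_sum_degree_fiber_mult_Xentry_mult:
  assumes "row_col_disjoint m"
  shows "coeff_sum (degree_fiber m) (c * (Xentry a b * Xentry a' b'))
    = (if a \<in> {b, b'} \<or> a' \<in> {b, b'} then 0 else
        \<Sum>u | u \<in> Poly_Mapping.keys c \<and> u + (mon (a, b) + mon (a', b')) \<in> degree_fiber m.
          Poly_Mapping.lookup c u)"
proof (cases "a = b \<or> a' = b'")
  case False
  let ?A = "mon (a, b) + mon (a', b')"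
  have "u + ?A \<notin> degree_fiber m" if "a = b' \<or> a' = b" for u
    using that add_not_mem_degree_fiber[OF assms, where A = ?A and t = a]
      add_not_mem_degree_fiber[OF assms, where A = ?A and t = a']
    by (auto simp: degree_in_add)
  with False show ?thesis
    by (auto simp: Xentry_mult coeff_sum_mult_single_one)
qed (auto simp: Xentry_mult)

lemma coeff_sum_degree_fiber_mult_minor:
  assumes "row_col_disjoint m" "g \<in> minors2 n"
  shows "coeff_sum (degree_fiber m) (c * g) = 0"
proof -
  obtain i i' j j' where g: "g = minor2 i i' j j'"
    using assms(2) unfolding minors2_def minor2_def by blast
  have "u + (mon (i, j) + mon (i', j')) \<in> degree_fiber m
      \<longleftrightarrow> u + (mon (i, j') + mon (i', j)) \<in> degree_fiber m" for u
    by (rule add_mem_degree_fiber_cong) (auto simp: mdeg_add degree_in_add)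
  then show ?thesis
    by (simp add: g minor2_def right_diff_distrib coeff_sum_diff
        coeff_sum_degree_fiber_mult_Xentry_mult[OF assms(1)] insert_commute)
qed

lemma coeff_sum_degree_fiber_ideal:
  assumes "row_col_disjoint m" "f \<in> ideal_gen n (minors2 n)"
  shows "coeff_sum (degree_fiber m) f = 0"
proof -
  obtain F c where "f = (\<Sum>g\<in>F. c g * g)" "F \<subseteq> minors2 n"
    using assms(2) unfolding ideal_gen_def by blast
  then show ?thesis
    using coeff_sum_degree_fiber_mult_minor[OF assms(1)]
    by (auto simp: coeff_sum_sum intro!: sum.neutral)
qed

lemma drl_total:
  assumes "Poly_Mapping.keys a \<subseteq> set vs" "Poly_Mapping.keys b \<subseteq> set vs" "a \<noteq> b"
  shows "drl_greater vs a b \<or> drl_greater vs b a"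
proof (cases "mdeg a = mdeg b")
  case True
  let ?K = "{k. k < length vs \<and> Poly_Mapping.lookup a (vs ! k) \<noteq> Poly_Mapping.lookup b (vs ! k)}"
  obtain v where v: "Poly_Mapping.lookup a v \<noteq> Poly_Mapping.lookup b v"
    using assms(3) by (auto simp: poly_mapping_eq_iff fun_eq_iff)
  then have "v \<in> Poly_Mapping.keys a \<union> Poly_Mapping.keys b"
    by (auto simp: in_keys_iff)
  then have "v \<in> set vs"
    using assms(1,2) by blast
  with v have "?K \<noteq> {}" by (auto simp: in_set_conv_nth)
  moreover have "finite ?K" by simp
  ultimately obtain k where k: "k \<in> ?K" and above: "\<And>l. l \<in> ?K \<Longrightarrow> l \<le> k"
    using Max_in Max_ge by blast
  have eq_above: "\<forall>l. k < l \<and> l < length vs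
      \<longrightarrow> Poly_Mapping.lookup a (vs ! l) = Poly_Mapping.lookup b (vs ! l)"
    using above by (auto simp: not_le[symmetric])
  have "k < length vs" using k by simp
  consider "Poly_Mapping.lookup a (vs ! k) < Poly_Mapping.lookup b (vs ! k)"
    | "Poly_Mapping.lookup b (vs ! k) < Poly_Mapping.lookup a (vs ! k)"
    using k by (auto simp: nat_neq_iff)
  then show ?thesis
  proof cases
    case 1
    then have "drl_greater vs a b"
      using True \<open>k < length vs\<close> eq_above unfolding drl_greater_def by blast
    then show ?thesis ..
  next
    case 2
    then have "drl_greater vs b a"
      using True \<open>k < length vs\<close> eq_above unfolding drl_greater_def by auto
    then show ?thesis ..
  qed
next
  case False
  then have "mdeg a > mdeg b \<or> mdeg b > mdeg a" by arith
  then show ?thesis by (elim disjE) (simp_all add: drl_greater_def)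
qed

lemma drl_trans:
  assumes ab: "drl_greater vs a b" and bc: "drl_greater vs b c"
  shows "drl_greater vs a c"
proof (cases "mdeg a = mdeg b \<and> mdeg b = mdeg c")
  case True
  from ab True obtain k1 where k1: "k1 < length vs"
    "Poly_Mapping.lookup a (vs ! k1) < Poly_Mapping.lookup b (vs ! k1)"
    "\<forall>l. k1 < l \<and> l < length vs
      \<longrightarrow> Poly_Mapping.lookup a (vs ! l) = Poly_Mapping.lookup b (vs ! l)"
    unfolding drl_greater_def by auto
  from bc True obtain k2 where k2: "k2 < length vs"
    "Poly_Mapping.lookup b (vs ! k2) < Poly_Mapping.lookup c (vs ! k2)"
    "\<forall>l. k2 < l \<and> l < length vs
      \<longrightarrow> Poly_Mapping.lookup b (vs ! l) = Poly_Mapping.lookup c (vs ! l)"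
    unfolding drl_greater_def by auto
  define k where "k = max k1 k2"
  have "Poly_Mapping.lookup a (vs ! k) < Poly_Mapping.lookup c (vs ! k)"
  proof (cases k1 k2 rule: linorder_cases)
    case less
    then show ?thesis using k1(3) k2(1,2) by (simp add: k_def)
  next
    case equal
    then show ?thesis using k1(2) k2(2) by (simp add: k_def)
  next
    case greater
    then show ?thesis using k2(3) k1(1,2) by (simp add: k_def)
  qed
  moreover have "\<forall>l. k < l \<and> l < length vs
      \<longrightarrow> Poly_Mapping.lookup a (vs ! l) = Poly_Mapping.lookup c (vs ! l)"
    using k1(3) k2(3) by (simp add: k_def)
  moreover have "k < length vs"
    using k1(1) k2(1) by (simp add: k_def)
  ultimately show ?thesis
    using True unfolding drl_greater_def by (intro disjI2 conjI exI[of _ k]) auto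
next
  case False
  have "mdeg a \<ge> mdeg b" "mdeg b \<ge> mdeg c"
    using ab bc unfolding drl_greater_def by auto
  with False have "mdeg a > mdeg c" by auto
  then show ?thesis by (simp add: drl_greater_def)
qed

lemma drl_greatest_exists:
  assumes "finite S" "S \<noteq> {}" "\<forall>x\<in>S. Poly_Mapping.keys x \<subseteq> set vs"
  shows "\<exists>c\<in>S. \<forall>x\<in>S. x \<noteq> c \<longrightarrow> drl_greater vs c x"
  using assms
proof (induction S rule: finite_ne_induct)
  case (insert x S)
  then obtain c where c: "c \<in> S" "\<forall>y\<in>S. y \<noteq> c \<longrightarrow> drl_greater vs c y"
    by auto
  show ?case
  proof (cases "x = c \<or> drl_greater vs c x")
    case True
    then show ?thesis using c by auto
  next
    case False
    then have "drl_greater vs x c"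
      using drl_total[of c vs x] insert.prems c(1) by auto
    then show ?thesis
      using c drl_trans by (intro bexI[of _ x]) auto
  qed
qed simp

lemma is_lead_monom_exists:
  assumes "f \<noteq> 0" "\<forall>m\<in>Poly_Mapping.keys f. Poly_Mapping.keys m \<subseteq> set vs"
  shows "\<exists>m. is_lead_monom vs f m"
  using drl_greatest_exists[of "Poly_Mapping.keys f" vs] assms
  unfolding is_lead_monom_def by auto

lemma Ring_add: "f \<in> Ring n \<Longrightarrow> g \<in> Ring n \<Longrightarrow> f + g \<in> Ring n"
  using keys_add[of f g] by (auto simp: Ring_def)

lemma Ring_diff: "f \<in> Ring n \<Longrightarrow> g \<in> Ring n \<Longrightarrow> f - g \<in> Ring n"
  using keys_diff[of f g] by (auto simp: Ring_def)

lemma Ring_mult: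
  assumes "f \<in> Ring n" "g \<in> Ring n"
  shows "f * g \<in> Ring n"
  unfolding Ring_def
proof (intro CollectI ballI)
  fix m
  assume "m \<in> Poly_Mapping.keys (f * g)"
  then obtain a b where "m = a + b" "a \<in> Poly_Mapping.keys f" "b \<in> Poly_Mapping.keys g"
    using keys_mult[of f g] by blast
  then show "Poly_Mapping.keys m \<subseteq> Vars n"
    using keys_add[of a b] assms unfolding Ring_def by blast
qed

lemma Ring_sum: "(\<And>x. x \<in> X \<Longrightarrow> h x \<in> Ring n) \<Longrightarrow> (\<Sum>x\<in>X. h x) \<in> Ring n"
proof (induction X rule: infinite_finite_induct)
  case (insert x X)
  then show ?case by (simp add: Ring_add)
qed (simp_all add: Ring_def)

lemma ideal_gen_subset_Ring: "G \<subseteq> Ring n \<Longrightarrow> ideal_gen n G \<subseteq> Ring n"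
  by (auto simp: ideal_gen_def intro!: Ring_sum Ring_mult)

lemma Xentry_mem_Ring: "i \<in> {1..n+1} \<Longrightarrow> j \<in> {1..n+1} \<Longrightarrow> Xentry i j \<in> Ring n"
  by (auto simp: Xentry_def Var_def Ring_def Vars_def)

lemma minors2_subset_Ring: "minors2 n \<subseteq> Ring n"
  by (auto simp: minors2_def intro!: Ring_diff Ring_mult Xentry_mem_Ring)

lemma is_lead_monom_uminus [simp]: "is_lead_monom vs (- g) m \<longleftrightarrow> is_lead_monom vs g m"
  by (simp add: is_lead_monom_def)

(* vs lists the variables in decreasing order, so this says that x_v is smaller than every
   variable of W. *)
definition var_below :: "variable list \<Rightarrow> variable \<Rightarrow> variable set \<Rightarrow> bool" where
  "var_below vs v W \<longleftrightarrow>
     (\<exists>k < length vs. vs ! k = v \<and> (\<forall>l. k < l \<and> l < length vs \<longrightarrow> vs ! l \<notin> W))"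

lemma not_drl_greater_diag_antidiag:
  assumes "p \<noteq> p'" "q \<noteq> q'" and below: "var_below vs (p, q) {(p, q'), (p', q)}"
  shows "\<not> drl_greater vs (mon (p, q) + mon (p', q')) (mon (p, q') + mon (p', q))"
    (is "\<not> drl_greater vs ?B ?A")
proof
  assume "drl_greater vs ?B ?A"
  moreover have "mdeg ?A = mdeg ?B" by (simp add: mdeg_add)
  ultimately obtain k where k: "k < length vs"
    "Poly_Mapping.lookup ?B (vs ! k) < Poly_Mapping.lookup ?A (vs ! k)"
    "\<forall>l. k < l \<and> l < length vs
      \<longrightarrow> Poly_Mapping.lookup ?B (vs ! l) = Poly_Mapping.lookup ?A (vs ! l)"
    unfolding drl_greater_def by auto
  from k(2) have vs_k: "vs ! k \<in> {(p, q'), (p', q)}"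
    by (auto simp: lookup_single_add_single split: if_splits)
  from below obtain kz where kz: "kz < length vs" "vs ! kz = (p, q)"
    "\<forall>l. kz < l \<and> l < length vs \<longrightarrow> vs ! l \<notin> {(p, q'), (p', q)}"
    unfolding var_below_def by blast
  show False
  proof (cases k kz rule: linorder_cases)
    case less
    with k(3) kz(1) have "Poly_Mapping.lookup ?B (vs ! kz) = Poly_Mapping.lookup ?A (vs ! kz)"
      by blast
    with kz(2) assms(1,2) show False by (simp add: lookup_single_add_single)
  next
    case equal
    with vs_k kz(2) assms(1,2) show False by auto
  next
    case greater
    with vs_k kz(3) k(1) show False by blast
  qed
qed

lemma is_lead_monom_minor2:
  assumes vs: "set vs = Vars n" and range: "{p, p', q, q'} \<subseteq> {1..n+1}"
    and ne: "p \<noteq> p'" "q \<noteq> q'" "p \<noteq> q'" "p' \<noteq> q"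
    and smallest: "p = q \<or> p' = q' \<or> var_below vs (p, q) {(p, q'), (p', q)}"
  shows "is_lead_monom vs (minor2 p p' q q') (mon (p, q') + mon (p', q))"
proof -
  define A where "A = mon (p, q') + mon (p', q)"
  have antidiag: "Xentry p q' * Xentry p' q = Poly_Mapping.single A 1"
    using ne by (simp add: Xentry_mult A_def)
  show ?thesis
  proof (cases "p = q \<or> p' = q'")
    case True
    then have "Xentry p q * Xentry p' q' = 0"
      by (auto simp: Xentry_def)
    then have "minor2 p p' q q' = - Poly_Mapping.single A 1"
      by (simp add: minor2_def antidiag)
    then show ?thesis
      unfolding A_def[symmetric] is_lead_monom_def by simp
  next
    case False
    define B where "B = mon (p, q) + mon (p', q')"
    have "Xentry p q * Xentry p' q' = Poly_Mapping.single B 1"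
      using False by (simp add: Xentry_mult B_def)
    then have minor: "minor2 p p' q q' = Poly_Mapping.single B 1 - Poly_Mapping.single A 1"
      by (simp only: minor2_def antidiag)
    have "Poly_Mapping.lookup A (p, q) \<noteq> Poly_Mapping.lookup B (p, q)"
      using ne by (simp add: A_def B_def lookup_single_add_single)
    then have "A \<noteq> B" by auto
    then have keys: "Poly_Mapping.keys (minor2 p p' q q') = {A, B}"
      by (auto simp: minor in_keys_iff lookup_minus lookup_single when_def split: if_splits)
    have "Poly_Mapping.keys A \<subseteq> set vs" "Poly_Mapping.keys B \<subseteq> set vs"
      using range ne False keys_add[of "mon (p, q')" "mon (p', q)"]
        keys_add[of "mon (p, q)" "mon (p', q')"]
      by (auto simp: A_def B_def vs Vars_def)
    moreover have "\<not> drl_greater vs B A"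
      using not_drl_greater_diag_antidiag[of p p' q q' vs] smallest False ne
      by (simp add: A_def B_def)
    ultimately have "drl_greater vs A B"
      using drl_total \<open>A \<noteq> B\<close> by blast
    then show ?thesis
      using \<open>A \<noteq> B\<close> by (auto simp: is_lead_monom_def keys A_def)
  qed
qed

definition standard_monom :: "nat \<Rightarrow> variable list \<Rightarrow> monomial \<Rightarrow> bool" where
  "standard_monom n vs m \<longleftrightarrow> (\<forall>g\<in>minors2 n. \<forall>mg. is_lead_monom vs g mg \<longrightarrow> \<not> monom_dvd mg m)"

lemma monom_dvd_mon_add_mon:
  assumes "x \<in> Poly_Mapping.keys m" "y \<in> Poly_Mapping.keys m" "x \<noteq> y"
  shows "monom_dvd (mon x + mon y) m"
  using assms by (auto simp: monom_dvd_def lookup_single_add_single in_keys_iff)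

lemma standard_monom_no_cross:
  assumes vs: "set vs = Vars n" and std: "standard_monom n vs m"
    and m_vars: "Poly_Mapping.keys m \<subseteq> Vars n"
    and keys: "(p, q') \<in> Poly_Mapping.keys m" "(p', q) \<in> Poly_Mapping.keys m"
    and ne: "p \<noteq> p'" "q \<noteq> q'"
    and smallest: "p = q \<or> p' = q' \<or> var_below vs (p, q) {(p, q'), (p', q)}"
  shows False
proof -
  have range: "{p, p', q, q'} \<subseteq> {1..n+1}" and "p \<noteq> q'" "p' \<noteq> q"
    using keys m_vars by (auto simp: Vars_def)
  then have lead: "is_lead_monom vs (minor2 p p' q q') (mon (p, q') + mon (p', q))"
    using is_lead_monom_minor2[OF vs] ne smallest by blast
  obtain g where "g \<in> minors2 n" "g = minor2 p p' q q' \<or> g = - minor2 p p' q q'"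
    using minor2_or_uminus_mem_minors2[OF range ne] by auto
  moreover have "monom_dvd (mon (p, q') + mon (p', q)) m"
    using keys ne by (intro monom_dvd_mon_add_mon) auto
  ultimately show False
    using std lead unfolding standard_monom_def by auto
qed

lemma standard_monom_row_col_disjoint:
  assumes "set vs = Vars n" "standard_monom n vs m" "Poly_Mapping.keys m \<subseteq> Vars n"
  shows "row_col_disjoint m"
  unfolding row_col_disjoint_def
proof (rule allI, rule ccontr)
  fix t
  assume "\<not> (row_degree m t = 0 \<or> col_degree m t = 0)"
  then obtain b c where in_m: "(t, b) \<in> Poly_Mapping.keys m" "(c, t) \<in> Poly_Mapping.keys m"
    by (auto simp: degree_in_eq_0_iff)
  then have "t \<noteq> b" "c \<noteq> t"
    using assms(3) by (auto simp: Vars_def)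
  then show False
    using standard_monom_no_cross[OF assms in_m] by auto
qed

lemma standard_monom_drl_minimal_in_degree_fiber:
  assumes vs: "set vs = Vars n" and std: "standard_monom n vs m"
    and m_vars: "Poly_Mapping.keys m \<subseteq> Vars n" and fiber: "m' \<in> degree_fiber m"
  shows "\<not> drl_greater vs m m'"
proof
  assume "drl_greater vs m m'"
  with fiber obtain k where k: "k < length vs"
    "Poly_Mapping.lookup m (vs ! k) < Poly_Mapping.lookup m' (vs ! k)"
    "\<forall>l. k < l \<and> l < length vs
      \<longrightarrow> Poly_Mapping.lookup m (vs ! l) = Poly_Mapping.lookup m' (vs ! l)"
    unfolding drl_greater_def degree_fiber_def by auto
  obtain p q where pq: "vs ! k = (p, q)" by fastforce
  from fiber have "row_degree m p = row_degree m' p" "col_degree m q = col_degree m' q"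
    by (simp_all add: degree_fiber_def)
  then obtain v w where
    v: "fst v = p" "v \<noteq> (p, q)" "Poly_Mapping.lookup m' v < Poly_Mapping.lookup m v" and
    w: "snd w = q" "w \<noteq> (p, q)" "Poly_Mapping.lookup m' w < Poly_Mapping.lookup m w"
    using degree_in_eq_exchange[of "\<lambda>v. fst v = p" m m' "(p, q)"]
      degree_in_eq_exchange[of "\<lambda>v. snd v = q" m m' "(p, q)"] k(2) pq by auto
  obtain q' p' where v_eq: "v = (p, q')" and w_eq: "w = (p', q)"
    using v(1) w(1) by (metis prod.collapse)
  have "\<forall>l. k < l \<and> l < length vs \<longrightarrow> vs ! l \<notin> {(p, q'), (p', q)}"
    using k(3) v(3) w(3) v_eq w_eq by auto
  then have "var_below vs (p, q) {(p, q'), (p', q)}"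
    unfolding var_below_def using k(1) pq by blast
  moreover have "(p, q') \<in> Poly_Mapping.keys m" "(p', q) \<in> Poly_Mapping.keys m"
    using v(3) w(3) v_eq w_eq by (auto simp: in_keys_iff)
  moreover have "p \<noteq> p'" "q \<noteq> q'"
    using v(2) w(2) v_eq w_eq by auto
  ultimately show False
    using standard_monom_no_cross[OF vs std m_vars] by blast
qed

theorem corollary6p1:
  fixes n :: nat and vs :: "variable list"
  assumes "n \<ge> 1"
    and "distinct vs" and "set vs = Vars n"
  shows "is_groebner_basis n vs (minors2 n)"
  unfolding is_groebner_basis_def
proof (intro ballI impI)
  fix f
  assume f: "f \<in> ideal_gen n (minors2 n)" "f \<noteq> 0"
  have f_vars: "\<forall>m\<in>Poly_Mapping.keys f. Poly_Mapping.keys m \<subseteq> Vars n"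
    using ideal_gen_subset_Ring[OF minors2_subset_Ring] f(1) by (auto simp: Ring_def)
  then obtain m where lead: "is_lead_monom vs f m"
    using is_lead_monom_exists f(2) assms(3) by metis
  show "\<exists>g\<in>minors2 n. \<exists>mf mg. is_lead_monom vs f mf \<and> is_lead_monom vs g mg \<and> monom_dvd mg mf"
  proof (rule ccontr)
    assume "\<not> ?thesis"
    then have std: "standard_monom n vs m"
      using lead by (auto simp: standard_monom_def)
    have m_vars: "Poly_Mapping.keys m \<subseteq> Vars n"
      using lead f_vars by (auto simp: is_lead_monom_def)
    have "Poly_Mapping.keys f \<inter> degree_fiber m = {m}"
      using lead standard_monom_drl_minimal_in_degree_fiber[OF assms(3) std m_vars]
      by (auto simp: is_lead_monom_def degree_fiber_def)
    then have "coeff_sum (degree_fiber m) f = Poly_Mapping.lookup f m"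
      by (simp add: coeff_sum_def)
    moreover have "coeff_sum (degree_fiber m) f = 0"
      using standard_monom_row_col_disjoint[OF assms(3) std m_vars] f(1)
      by (rule coeff_sum_degree_fiber_ideal)
    ultimately show False
      using lead by (simp add: is_lead_monom_def in_keys_iff)
  qed
qed

end
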